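(* Let $G$ be a group, $Z\leq Z(G)$, and let $\mathcal{C}$ be a $G/Z$-conjugacy class. Let $x\in G$ be such that the image of $x$ in $G/Z$ lies in $\mathcal{C}$, and denote by $\mathcal{C}_x$ the $G$-conjugacy class of $x$. If $\mathcal{K}(G,\mathcal{C}_x)$ is connected, then $\mathcal{K}(G/Z,\mathcal{C})$ is connected. Moreover, if the order $o$ of an element of $\mathcal{C}$ is prime to the order of $Z$, then $x$ can be taken to have order $o$.
   Context: For a group $H$ and a conjugacy class $\mathcal{D}$ of $H$, $\mathcal{K}(H,\mathcal{D})$ denotes the graph with vertex set $\mathcal{D}$ in which distinct $a,b\in\mathcal{D}$ are adjacent iff $C_H(ab)\cap\mathcal{D}\neq\emptyset$. *)

theory Defs
  imports "HOL-Algebra.Algebra"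
begin

definition grp_center :: "('a, 'b) monoid_scheme \<Rightarrow> 'a set" where
  "grp_center H = {z \<in> carrier H. \<forall>g \<in> carrier H. z \<otimes>\<^bsub>H\<^esub> g = g \<otimes>\<^bsub>H\<^esub> z}"

definition grp_centralizer :: "('a, 'b) monoid_scheme \<Rightarrow> 'a \<Rightarrow> 'a set" where
  "grp_centralizer H g = {h \<in> carrier H. h \<otimes>\<^bsub>H\<^esub> g = g \<otimes>\<^bsub>H\<^esub> h}"

definition conj_class :: "('a, 'b) monoid_scheme \<Rightarrow> 'a \<Rightarrow> 'a set" where
  "conj_class H a = {h \<otimes>\<^bsub>H\<^esub> a \<otimes>\<^bsub>H\<^esub> inv\<^bsub>H\<^esub> h | h. h \<in> carrier H}"

definition K_adj :: "('a, 'b) monoid_scheme \<Rightarrow> 'a set \<Rightarrow> 'a \<Rightarrow> 'a \<Rightarrow> bool" where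
  "K_adj H D a b \<longleftrightarrow> a \<in> D \<and> b \<in> D \<and> a \<noteq> b \<and>
     grp_centralizer H (a \<otimes>\<^bsub>H\<^esub> b) \<inter> D \<noteq> {}"

definition K_connected :: "('a, 'b) monoid_scheme \<Rightarrow> 'a set \<Rightarrow> bool" where
  "K_connected H D \<longleftrightarrow> (\<forall>a \<in> D. \<forall>b \<in> D. (K_adj H D)\<^sup>*\<^sup>* a b)"

end

theory Submission
  imports Defs
begin

text \<open>A group homomorphism maps each edge of \<open>K(G, D)\<close> to an edge or a loop of
  \<open>K(H, h ` D)\<close>, because it maps centralisers into centralisers; so it preserves
  connectedness, and for the surjection \<open>G \<rightarrow> G/Z\<close> the image of \<open>\<C>\<^sub>x\<close> is \<open>\<C>\<close>.
  For the order statement, take any preimage \<open>y\<close> of \<open>c\<close>, let \<open>k\<close> be the order of \<open>c\<close>,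
  and choose \<open>m\<close> with \<open>|Z| m \<equiv> 1 (mod k)\<close>. Then \<open>x = y\<^bsup>|Z| m\<^esup>\<close> still maps to \<open>c\<close>,
  while \<open>y\<^sup>k \<in> Z\<close> gives \<open>x\<^sup>k = ((y\<^sup>k)\<^bsup>|Z|\<^esup>)\<^sup>m = 1\<close>; and \<open>k\<close> divides the order
  of every preimage of \<open>c\<close>.\<close>

lemma rtranclp_map:
  assumes "R\<^sup>*\<^sup>* p q"
    and "\<And>s t. R s t \<Longrightarrow> S\<^sup>*\<^sup>* (f s) (f t)"
  shows "S\<^sup>*\<^sup>* (f p) (f q)"
  using assms(1)
proof (induction rule: rtranclp_induct)
  case base
  then show ?case by simp
next
  case (step y z)
  then show ?case using assms(2) by (meson rtranclp_trans)
qed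

lemma (in group) central_subgroup_is_normal:
  assumes "subgroup Z G" and "Z \<subseteq> grp_center G"
  shows "Z \<lhd> G"
proof -
  have "x \<otimes> z \<otimes> inv x \<in> Z" if x: "x \<in> carrier G" and z: "z \<in> Z" for x z
  proof -
    have "x \<otimes> z = z \<otimes> x" using assms(2) x z unfolding grp_center_def by auto
    then have "x \<otimes> z \<otimes> inv x = z"
      using x z subgroup.mem_carrier[OF assms(1)] by (simp add: m_assoc)
    then show ?thesis using z by simp
  qed
  then show ?thesis using assms(1) normal_inv_iff by blast
qed

lemma (in group) conj_class_subset_carrier:
  "a \<in> carrier G \<Longrightarrow> conj_class G a \<subseteq> carrier G"
  unfolding conj_class_def by auto

lemma (in group) conj_class_conj_subset:
  assumes "a \<in> carrier G" and "h \<in> carrier G"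
  shows "conj_class G (h \<otimes> a \<otimes> inv h) \<subseteq> conj_class G a"
proof
  fix b assume "b \<in> conj_class G (h \<otimes> a \<otimes> inv h)"
  then obtain k where k: "k \<in> carrier G" and b: "b = k \<otimes> (h \<otimes> a \<otimes> inv h) \<otimes> inv k"
    unfolding conj_class_def by auto
  have "b = (k \<otimes> h) \<otimes> a \<otimes> inv (k \<otimes> h)"
    using assms k b by (simp add: m_assoc inv_mult_group)
  then show "b \<in> conj_class G a" unfolding conj_class_def using assms k by blast
qed

lemma (in group) conj_class_eq:
  assumes "a \<in> carrier G" and "b \<in> conj_class G a"
  shows "conj_class G b = conj_class G a"
proof -
  obtain h where h: "h \<in> carrier G" and b: "b = h \<otimes> a \<otimes> inv h"
    using assms(2) unfolding conj_class_def by auto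
  have "a = inv h \<otimes> b \<otimes> inv (inv h)"
    using assms(1) h b by (simp add: m_assoc) (simp add: m_assoc[symmetric])
  then have "conj_class G a \<subseteq> conj_class G b"
    using conj_class_conj_subset[of b "inv h"] assms(1) h b by simp
  moreover have "conj_class G b \<subseteq> conj_class G a"
    using conj_class_conj_subset assms(1) h b by simp
  ultimately show ?thesis by blast
qed

lemma (in group_hom) image_conj_class:
  assumes "x \<in> carrier G" and surj: "h ` carrier G = carrier H"
  shows "h ` conj_class G x = conj_class H (h x)"
proof
  show "h ` conj_class G x \<subseteq> conj_class H (h x)"
    using assms(1) by (auto simp: conj_class_def hom_inv)
next
  show "conj_class H (h x) \<subseteq> h ` conj_class G x"
  proof
    fix b assume "b \<in> conj_class H (h x)"
    then obtain k where k: "k \<in> carrier H" and b: "b = k \<otimes>\<^bsub>H\<^esub> h x \<otimes>\<^bsub>H\<^esub> inv\<^bsub>H\<^esub> k"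
      unfolding conj_class_def by auto
    obtain g where g: "g \<in> carrier G" and "k = h g" using k surj by auto
    then have "b = h (g \<otimes> x \<otimes> inv g)" using assms(1) b by (simp add: hom_inv)
    then show "b \<in> h ` conj_class G x" unfolding conj_class_def using g by blast
  qed
qed

lemma (in group_hom) K_adj_image:
  assumes "K_adj G D s t" and "D \<subseteq> carrier G" and "h s \<noteq> h t"
  shows "K_adj H (h ` D) (h s) (h t)"
proof -
  from assms(1) obtain e where s: "s \<in> D" and t: "t \<in> D" and e: "e \<in> D"
    and comm: "e \<otimes> (s \<otimes> t) = (s \<otimes> t) \<otimes> e"
    unfolding K_adj_def grp_centralizer_def by auto
  have "s \<in> carrier G" "t \<in> carrier G" "e \<in> carrier G" using s t e assms(2) by auto
  then have "h e \<otimes>\<^bsub>H\<^esub> (h s \<otimes>\<^bsub>H\<^esub> h t) = (h s \<otimes>\<^bsub>H\<^esub> h t) \<otimes>\<^bsub>H\<^esub> h e"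
    using arg_cong[OF comm, of h] by simp
  then have "h e \<in> grp_centralizer H (h s \<otimes>\<^bsub>H\<^esub> h t) \<inter> h ` D"
    using e assms(2) unfolding grp_centralizer_def by auto
  then show ?thesis unfolding K_adj_def using s t assms(3) by blast
qed

lemma (in group_hom) K_connected_image:
  assumes "D \<subseteq> carrier G" and "K_connected G D"
  shows "K_connected H (h ` D)"
  unfolding K_connected_def
proof (intro ballI)
  fix u v assume "u \<in> h ` D" "v \<in> h ` D"
  then obtain p q where p: "p \<in> D" "u = h p" and q: "q \<in> D" "v = h q" by blast
  have "(K_adj G D)\<^sup>*\<^sup>* p q" using assms(2) p q unfolding K_connected_def by blast
  moreover have "(K_adj H (h ` D))\<^sup>*\<^sup>* (h s) (h t)" if "K_adj G D s t" for s t
    using K_adj_image[OF that assms(1)] by (cases "h s = h t") auto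
  ultimately have "(K_adj H (h ` D))\<^sup>*\<^sup>* (h p) (h q)" by (rule rtranclp_map)
  then show "(K_adj H (h ` D))\<^sup>*\<^sup>* u v" using p q by simp
qed

lemma (in group_hom) ord_hom_dvd:
  assumes "g \<in> carrier G"
  shows "group.ord H (h g) dvd group.ord G g"
proof -
  have "h g [^]\<^bsub>H\<^esub> group.ord G g = h (g [^] group.ord G g)"
    using assms by (rule hom_nat_pow[symmetric])
  also have "\<dots> = h \<one>" using assms by (simp only: G.pow_ord_eq_1)
  also have "\<dots> = \<one>\<^bsub>H\<^esub>" by simp
  finally have "h g [^]\<^bsub>H\<^esub> group.ord G g = \<one>\<^bsub>H\<^esub>" .
  then show ?thesis using H.pow_eq_id assms by simp
qed

lemma (in group) subgroup_pow_card_eq_one: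
  assumes "subgroup Z G" and "finite Z" and "z \<in> Z"
  shows "z [^] card Z = \<one>"
proof -
  interpret Z: group "G\<lparr>carrier := Z\<rparr>"
    using assms(1) by (rule subgroup.subgroup_is_group) (rule is_group)
  have "z [^]\<^bsub>G\<lparr>carrier := Z\<rparr>\<^esub> order (G\<lparr>carrier := Z\<rparr>) = \<one>\<^bsub>G\<lparr>carrier := Z\<rparr>\<^esub>"
    using Z.pow_order_eq_1 assms(3) by simp
  then show ?thesis by (simp add: order_def nat_pow_consistent[symmetric])
qed

lemma (in normal) ex_coset_rep_with_ord:
  assumes "finite H" and y: "y \<in> carrier G"
    and coprime: "coprime (group.ord (G Mod H) (H #> y)) (card H)"
  shows "\<exists>x \<in> carrier G. H #> x = H #> y \<and> ord x = group.ord (G Mod H) (H #> y)"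
proof -
  interpret Q: group "G Mod H" by (rule factorgroup_is_group)
  interpret \<pi>: group_hom G "G Mod H" "\<lambda>g. H #> g"
    by unfold_locales (rule r_coset_hom_Mod)
  define c where "c = H #> y"
  define k where "k = Q.ord c"
  define n where "n = card H"
  have c: "c \<in> carrier (G Mod H)" using y unfolding c_def by simp
  have "n \<noteq> 0"
    using assms(1) subgroup.one_closed[OF subgroup_axioms] card_0_eq unfolding n_def by blast
  then obtain m w where bezout: "n * m = k * w + 1"
    using bezout_nat[of n k] coprime unfolding k_def c_def n_def
    by (auto simp: coprime_commute)
  define x where "x = y [^] (n * m)"
  have x: "x \<in> carrier G" using y unfolding x_def by simp
  have rcos_x: "H #> x = c"
  proof -
    have "H #> x = c [^]\<^bsub>G Mod H\<^esub> (k * w + 1)"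
      unfolding x_def c_def bezout using y by (rule \<pi>.hom_nat_pow)
    also have "\<dots> = (c [^]\<^bsub>G Mod H\<^esub> k) [^]\<^bsub>G Mod H\<^esub> w \<otimes>\<^bsub>G Mod H\<^esub> c"
      using c by (simp add: Q.nat_pow_mult[symmetric] Q.nat_pow_pow)
    also have "\<dots> = c"
      using c unfolding k_def by (simp only: Q.pow_ord_eq_1 Q.nat_pow_one Q.l_one)
    finally show ?thesis .
  qed
  have "H #> (y [^] k) = c [^]\<^bsub>G Mod H\<^esub> k" unfolding c_def using y by (rule \<pi>.hom_nat_pow)
  also have "\<dots> = H" using c unfolding k_def by simp
  finally have "y [^] k \<in> H" using y coset_join1 subgroup_axioms by blast
  then have "(y [^] k) [^] n = \<one>"
    unfolding n_def by (rule subgroup_pow_card_eq_one[OF subgroup_axioms assms(1)])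
  moreover have "x [^] k = ((y [^] k) [^] n) [^] m"
    using y by (simp add: x_def nat_pow_pow mult_ac)
  ultimately have "x [^] k = \<one>" by simp
  then have "ord x dvd k" using pow_eq_id x by blast
  moreover have "k dvd ord x" using \<pi>.ord_hom_dvd[OF x] rcos_x unfolding k_def by simp
  ultimately show ?thesis using x rcos_x unfolding c_def k_def by (auto intro: dvd_antisym)
qed

theorem lemma2p4:
  fixes G (structure) and Z :: "'a set" and C :: "'a set set" and a :: "'a set"
  assumes "group G"
    and "subgroup Z G" and "Z \<subseteq> grp_center G"
    and "a \<in> carrier (G Mod Z)" and "C = conj_class (G Mod Z) a"
  shows "(\<forall>x \<in> carrier G. Z #> x \<in> C \<longrightarrow> K_connected G (conj_class G x)
            \<longrightarrow> K_connected (G Mod Z) C)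
       \<and> (\<forall>c \<in> C. finite Z \<longrightarrow> coprime (group.ord (G Mod Z) c) (card Z)
            \<longrightarrow> (\<exists>x \<in> carrier G. Z #> x \<in> C \<and> group.ord G x = group.ord (G Mod Z) c))"
proof -
  interpret G: group G by fact
  interpret Z: normal Z G using G.central_subgroup_is_normal assms(2,3) .
  interpret Q: group "G Mod Z" by (rule Z.factorgroup_is_group)
  interpret \<pi>: group_hom G "G Mod Z" "\<lambda>g. Z #> g"
    by unfold_locales (rule Z.r_coset_hom_Mod)
  have surj: "(\<lambda>g. Z #> g) ` carrier G = carrier (G Mod Z)"
    by (simp add: carrier_FactGroup)
  show ?thesis
  proof (intro conjI ballI impI)
    fix x assume x: "x \<in> carrier G" and "Z #> x \<in> C" and conn: "K_connected G (conj_class G x)"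
    then have "C = conj_class (G Mod Z) (Z #> x)"
      using Q.conj_class_eq assms(4,5) by simp
    also have "\<dots> = (\<lambda>g. Z #> g) ` conj_class G x"
      using \<pi>.image_conj_class[OF x surj] by simp
    finally show "K_connected (G Mod Z) C"
      using \<pi>.K_connected_image[OF G.conj_class_subset_carrier[OF x] conn] by simp
  next
    fix c assume c: "c \<in> C" and "finite Z" and "coprime (group.ord (G Mod Z) c) (card Z)"
    moreover obtain y where "y \<in> carrier G" and "c = Z #> y"
      using c Q.conj_class_subset_carrier[OF assms(4)] surj assms(5) by blast
    ultimately show "\<exists>x \<in> carrier G. Z #> x \<in> C \<and> group.ord G x = group.ord (G Mod Z) c"
      using Z.ex_coset_rep_with_ord by metis
  qed
qed

end
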